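(* Let $f:D'^X\to\mathbb{R}$ be a function and let $(G,c)$ be a $k$-submodular $(X,k)$-network that represents $f$. Then an assignment $\phi:X\to D'$ is an extreme minimum solution of $f$ if and only if its corresponding cut $S_\phi$ is an extreme minimum cut.
   Context: $D=\{1,\dots,k\}$, $D'=\{0\}\cup D$. For $v\in X$ let $X_v=\{v_i:i\in D\}$. An $(X,k)$-network is a directed network with nonnegative capacities $c$ on the vertex set $\bigcup_{v\in X}X_v\cup\{s,t\}$; an $s$-$t$ cut is a vertex set $S$ with $s\in S$, $t\notin S$, of capacity $c(S)$ = total capacity of edges leaving $S$. For $\phi:X\to D'$, $S_\phi=\{s\}\cup\{v_{\phi(v)}:v\in X,\phi(v)\ne0\}$. An $s$-$t$ cut is normalised if it contains at most one vertex of each $X_v$. For an $s$-$t$ cut $S$, $\nu(S)=\{s\}\cup\{v_i: v\in X, S\cap X_v=\{v_i\}\}$. The network represents $f$ if $c(S_\phi)=f(\phi)$ for every $\phi$, and is $k$-submodular if $c(S)\ge c(\nu(S))$ for every $s$-$t$ cut $S$. A minimum solution $x$ of $f$ is dominated by a minimum solution $y$ if $x\ne y$ and $x_i\ne0\Rightarrow x_i=y_i$ for all $i$; it is extreme if not dominated. A normalised minimum cut $S$ is dominated by a normalised minimum cut $S'$ if $S\subsetneq S'$; it is an extreme minimum cut if not dominated. *)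

theory Defs
  imports Complex_Main
begin

text \<open>Vertices of an (X,k)-network: source s, sink t, and v_i for v in X, i in D = {1..k}.
  The ground set X is the (finite) universe of the type 'x.\<close>
datatype 'x vertex = Src | Tgt | Node 'x nat

definition Dset :: "nat \<Rightarrow> nat set" where
  "Dset k = {1..k}"

definition Dset' :: "nat \<Rightarrow> nat set" where
  "Dset' k = {0..k}"

definition Xv :: "nat \<Rightarrow> 'x \<Rightarrow> 'x vertex set" where
  "Xv k v = {Node v i | i. i \<in> Dset k}"

definition vertices :: "nat \<Rightarrow> 'x vertex set" where
  "vertices k = (\<Union>v. Xv k v) \<union> {Src, Tgt}"

definition capacities :: "nat \<Rightarrow> ('x vertex \<Rightarrow> 'x vertex \<Rightarrow> real) \<Rightarrow> bool" where
  "capacities k c \<longleftrightarrow> (\<forall>u\<in>vertices k. \<forall>w\<in>vertices k. c u w \<ge> 0)"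

definition st_cut :: "nat \<Rightarrow> 'x vertex set \<Rightarrow> bool" where
  "st_cut k S \<longleftrightarrow> S \<subseteq> vertices k \<and> Src \<in> S \<and> Tgt \<notin> S"

definition cut_cap :: "nat \<Rightarrow> ('x vertex \<Rightarrow> 'x vertex \<Rightarrow> real) \<Rightarrow> 'x vertex set \<Rightarrow> real" where
  "cut_cap k c S = (\<Sum>u\<in>S. \<Sum>w\<in>vertices k - S. c u w)"

definition assignment :: "nat \<Rightarrow> ('x \<Rightarrow> nat) \<Rightarrow> bool" where
  "assignment k \<phi> \<longleftrightarrow> (\<forall>v. \<phi> v \<in> Dset' k)"

definition S_of :: "('x \<Rightarrow> nat) \<Rightarrow> 'x vertex set" where
  "S_of \<phi> = {Src} \<union> {Node v (\<phi> v) | v. \<phi> v \<noteq> 0}"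

definition normalised :: "nat \<Rightarrow> 'x vertex set \<Rightarrow> bool" where
  "normalised k S \<longleftrightarrow> st_cut k S \<and> (\<forall>v. card (S \<inter> Xv k v) \<le> 1)"

definition nu :: "nat \<Rightarrow> 'x vertex set \<Rightarrow> 'x vertex set" where
  "nu k S = {Src} \<union> {Node v i | v i. S \<inter> Xv k v = {Node v i}}"

definition represents :: "nat \<Rightarrow> ('x vertex \<Rightarrow> 'x vertex \<Rightarrow> real) \<Rightarrow> (('x \<Rightarrow> nat) \<Rightarrow> real) \<Rightarrow> bool" where
  "represents k c f \<longleftrightarrow> (\<forall>\<phi>. assignment k \<phi> \<longrightarrow> cut_cap k c (S_of \<phi>) = f \<phi>)"

definition k_submodular_network :: "nat \<Rightarrow> ('x vertex \<Rightarrow> 'x vertex \<Rightarrow> real) \<Rightarrow> bool" where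
  "k_submodular_network k c \<longleftrightarrow>
     (\<forall>S. st_cut k S \<longrightarrow> cut_cap k c S \<ge> cut_cap k c (nu k S))"

definition min_solution :: "nat \<Rightarrow> (('x \<Rightarrow> nat) \<Rightarrow> real) \<Rightarrow> ('x \<Rightarrow> nat) \<Rightarrow> bool" where
  "min_solution k f x \<longleftrightarrow> assignment k x \<and> (\<forall>y. assignment k y \<longrightarrow> f x \<le> f y)"

definition dominates_sol :: "('x \<Rightarrow> nat) \<Rightarrow> ('x \<Rightarrow> nat) \<Rightarrow> bool" where
  "dominates_sol y x \<longleftrightarrow> x \<noteq> y \<and> (\<forall>i. x i \<noteq> 0 \<longrightarrow> x i = y i)"

definition extreme_min_solution :: "nat \<Rightarrow> (('x \<Rightarrow> nat) \<Rightarrow> real) \<Rightarrow> ('x \<Rightarrow> nat) \<Rightarrow> bool" where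
  "extreme_min_solution k f x \<longleftrightarrow> min_solution k f x \<and>
     \<not> (\<exists>y. min_solution k f y \<and> dominates_sol y x)"

definition min_cut :: "nat \<Rightarrow> ('x vertex \<Rightarrow> 'x vertex \<Rightarrow> real) \<Rightarrow> 'x vertex set \<Rightarrow> bool" where
  "min_cut k c S \<longleftrightarrow> st_cut k S \<and> (\<forall>T. st_cut k T \<longrightarrow> cut_cap k c S \<le> cut_cap k c T)"

definition normalised_min_cut :: "nat \<Rightarrow> ('x vertex \<Rightarrow> 'x vertex \<Rightarrow> real) \<Rightarrow> 'x vertex set \<Rightarrow> bool" where
  "normalised_min_cut k c S \<longleftrightarrow> normalised k S \<and> min_cut k c S"

definition extreme_min_cut :: "nat \<Rightarrow> ('x vertex \<Rightarrow> 'x vertex \<Rightarrow> real) \<Rightarrow> 'x vertex set \<Rightarrow> bool" where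
  "extreme_min_cut k c S \<longleftrightarrow> normalised_min_cut k c S \<and>
     \<not> (\<exists>S'. normalised_min_cut k c S' \<and> S \<subset> S')"

end

theory Submission
  imports Defs
begin

text \<open>Assignments correspond bijectively to normalised cuts via \<open>S_of\<close>, and this
  correspondence turns domination of assignments into strict inclusion of cuts.
  Since \<open>\<nu>\<close> maps every cut to a normalised one of no larger capacity, the minimum cut
  value is attained by a normalised cut, i.e. it equals \<open>min f\<close>; hence minimum solutions
  correspond exactly to normalised minimum cuts, and extremality transfers.\<close>

definition assignment_of_cut :: "nat \<Rightarrow> 'x vertex set \<Rightarrow> 'x \<Rightarrow> nat" where
  "assignment_of_cut k S v =
     (if \<exists>i. S \<inter> Xv k v = {Node v i} then THE i. S \<inter> Xv k v = {Node v i} else 0)"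

lemma assignment_of_cut_eq: "S \<inter> Xv k v = {Node v i} \<Longrightarrow> assignment_of_cut k S v = i"
  unfolding assignment_of_cut_def by auto

lemma assignment_of_cut_eq_0:
  "\<nexists>i. S \<inter> Xv k v = {Node v i} \<Longrightarrow> assignment_of_cut k S v = 0"
  unfolding assignment_of_cut_def by auto

lemma singleton_Xv_in_Dset:
  assumes "S \<inter> Xv k v = {Node v i}"
  shows "i \<in> Dset k"
proof -
  from assms have "Node v i \<in> S \<inter> Xv k v"
    by simp
  then show ?thesis
    unfolding Xv_def by simp
qed

lemma assignment_assignment_of_cut: "assignment k (assignment_of_cut k S)"
  unfolding assignment_def
proof
  fix v
  show "assignment_of_cut k S v \<in> Dset' k"
  proof (cases "\<exists>i. S \<inter> Xv k v = {Node v i}")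
    case True
    then obtain i where singleton: "S \<inter> Xv k v = {Node v i}" ..
    from singleton_Xv_in_Dset[OF singleton] show ?thesis
      unfolding assignment_of_cut_eq[OF singleton] by (simp add: Dset_def Dset'_def)
  qed (simp add: assignment_of_cut_eq_0 Dset'_def)
qed

lemma nu_eq_S_of_assignment_of_cut: "nu k S = S_of (assignment_of_cut k S)"
proof -
  have singleton_iff:
    "S \<inter> Xv k v = {Node v i} \<longleftrightarrow> assignment_of_cut k S v = i \<and> i \<noteq> 0" for v i
  proof
    assume singleton: "S \<inter> Xv k v = {Node v i}"
    have "i \<noteq> 0"
      using singleton_Xv_in_Dset[OF singleton] by (simp add: Dset_def)
    then show "assignment_of_cut k S v = i \<and> i \<noteq> 0"
      by (simp add: assignment_of_cut_eq[OF singleton])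
  next
    assume i: "assignment_of_cut k S v = i \<and> i \<noteq> 0"
    have "\<exists>j. S \<inter> Xv k v = {Node v j}"
    proof (rule ccontr)
      assume "\<nexists>j. S \<inter> Xv k v = {Node v j}"
      then have "assignment_of_cut k S v = 0"
        by (rule assignment_of_cut_eq_0)
      with i show False
        by linarith
    qed
    then obtain j where j: "S \<inter> Xv k v = {Node v j}" ..
    moreover have "j = i"
      using i by (simp add: assignment_of_cut_eq[OF j])
    ultimately show "S \<inter> Xv k v = {Node v i}"
      by simp
  qed
  show ?thesis
    unfolding nu_def S_of_def singleton_iff by auto
qed

lemma st_cut_S_of:
  assumes "assignment k \<phi>"
  shows "st_cut k (S_of \<phi>)"
proof -
  have "Node v (\<phi> v) \<in> Xv k v" if "\<phi> v \<noteq> 0" for v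
    using assms that unfolding assignment_def Xv_def Dset_def Dset'_def by auto
  then have "S_of \<phi> \<subseteq> vertices k"
    unfolding S_of_def vertices_def by blast
  then show ?thesis
    unfolding st_cut_def S_of_def by simp
qed

lemma normalised_S_of:
  assumes "assignment k \<phi>"
  shows "normalised k (S_of \<phi>)"
proof -
  have "card (S_of \<phi> \<inter> Xv k v) \<le> 1" for v
  proof -
    have "S_of \<phi> \<inter> Xv k v \<subseteq> {Node v (\<phi> v)}"
      unfolding S_of_def Xv_def by auto
    then have "card (S_of \<phi> \<inter> Xv k v) \<le> card {Node v (\<phi> v)}"
      by (intro card_mono) simp_all
    then show ?thesis
      by simp
  qed
  with st_cut_S_of[OF assms] show ?thesis
    unfolding normalised_def by blast
qed

lemma finite_Xv: "finite (Xv k v)"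
proof -
  have "Xv k v = Node v ` Dset k"
    unfolding Xv_def by auto
  then show ?thesis
    by (simp add: Dset_def)
qed

lemma nu_normalised:
  assumes "normalised k S"
  shows "nu k S = S"
proof -
  have S: "S \<subseteq> vertices k" "Src \<in> S" "Tgt \<notin> S"
    and card: "\<And>v. card (S \<inter> Xv k v) \<le> 1"
    using assms unfolding normalised_def st_cut_def by auto
  show ?thesis
  proof (intro equalityI subsetI)
    show "x \<in> S" if "x \<in> nu k S" for x
      using that S(2) unfolding nu_def by auto
  next
    fix x
    assume x: "x \<in> S"
    show "x \<in> nu k S"
    proof (cases "x = Src")
      case False
      with x S(1,3) obtain v where xv: "x \<in> Xv k v"
        unfolding vertices_def by auto
      then obtain i where "x = Node v i"
        unfolding Xv_def by auto
      moreover have "S \<inter> Xv k v = {x}"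
      proof -
        have fin: "finite (S \<inter> Xv k v)"
          using finite_Xv[of k v] by simp
        from x xv card[of v] show ?thesis
          using card_le_Suc0_iff_eq[OF fin] by auto
      qed
      ultimately show ?thesis
        unfolding nu_def by auto
    qed (simp add: nu_def)
  qed
qed

lemma normalised_iff_S_of:
  "normalised k S \<longleftrightarrow> (\<exists>\<phi>. assignment k \<phi> \<and> S = S_of \<phi>)"
proof
  assume "normalised k S"
  then have "S = nu k S"
    by (rule nu_normalised[symmetric])
  also have "\<dots> = S_of (assignment_of_cut k S)"
    by (rule nu_eq_S_of_assignment_of_cut)
  finally show "\<exists>\<phi>. assignment k \<phi> \<and> S = S_of \<phi>"
    using assignment_assignment_of_cut by blast
next
  assume "\<exists>\<phi>. assignment k \<phi> \<and> S = S_of \<phi>"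
  then show "normalised k S"
    using normalised_S_of by blast
qed

lemma S_of_subset_iff: "S_of x \<subseteq> S_of y \<longleftrightarrow> (\<forall>v. x v \<noteq> 0 \<longrightarrow> x v = y v)"
proof
  assume sub: "S_of x \<subseteq> S_of y"
  show "\<forall>v. x v \<noteq> 0 \<longrightarrow> x v = y v"
  proof (intro allI impI)
    fix v
    assume "x v \<noteq> 0"
    then have "Node v (x v) \<in> S_of x"
      unfolding S_of_def by blast
    with sub have "Node v (x v) \<in> S_of y"
      by blast
    then show "x v = y v"
      unfolding S_of_def by auto
  qed
next
  assume "\<forall>v. x v \<noteq> 0 \<longrightarrow> x v = y v"
  then show "S_of x \<subseteq> S_of y"
    unfolding S_of_def by fastforce
qed

lemma inj_S_of: "inj S_of"
proof (rule injI)
  fix x y :: "'x \<Rightarrow> nat"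
  assume "S_of x = S_of y"
  then have "\<forall>v. x v \<noteq> 0 \<longrightarrow> x v = y v" and "\<forall>v. y v \<noteq> 0 \<longrightarrow> y v = x v"
    unfolding S_of_subset_iff[symmetric] by simp_all
  then have "x v = y v" for v
    by metis
  then show "x = y" ..
qed

lemma dominates_sol_iff_S_of_psubset: "dominates_sol y x \<longleftrightarrow> S_of x \<subset> S_of y"
  unfolding dominates_sol_def psubset_eq S_of_subset_iff[symmetric] inj_eq[OF inj_S_of]
  by blast

lemma min_solution_iff_min_cut:
  assumes sub: "k_submodular_network k c"
    and rep: "represents k c f"
    and \<phi>: "assignment k \<phi>"
  shows "min_solution k f \<phi> \<longleftrightarrow> min_cut k c (S_of \<phi>)"
proof -
  have cap: "cut_cap k c (S_of y) = f y" if "assignment k y" for y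
    using rep that unfolding represents_def by blast
  show ?thesis
  proof
    assume min: "min_solution k f \<phi>"
    have "cut_cap k c (S_of \<phi>) \<le> cut_cap k c T" if "st_cut k T" for T
    proof -
      have "cut_cap k c (S_of \<phi>) = f \<phi>"
        by (rule cap[OF \<phi>])
      also have "\<dots> \<le> f (assignment_of_cut k T)"
        using min assignment_assignment_of_cut unfolding min_solution_def by blast
      also have "\<dots> = cut_cap k c (nu k T)"
        unfolding nu_eq_S_of_assignment_of_cut
        by (rule cap[OF assignment_assignment_of_cut, symmetric])
      also have "\<dots> \<le> cut_cap k c T"
        using sub that unfolding k_submodular_network_def by blast
      finally show ?thesis .
    qed
    with st_cut_S_of[OF \<phi>] show "min_cut k c (S_of \<phi>)"
      unfolding min_cut_def by blast
  next
    assume cut: "min_cut k c (S_of \<phi>)"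
    have "f \<phi> \<le> f y" if y: "assignment k y" for y
    proof -
      have "f \<phi> = cut_cap k c (S_of \<phi>)"
        by (rule cap[OF \<phi>, symmetric])
      also have "\<dots> \<le> cut_cap k c (S_of y)"
        using cut st_cut_S_of[OF y] unfolding min_cut_def by blast
      also have "\<dots> = f y"
        by (rule cap[OF y])
      finally show ?thesis .
    qed
    with \<phi> show "min_solution k f \<phi>"
      unfolding min_solution_def by blast
  qed
qed

lemma normalised_min_cut_iff_min_solution:
  assumes "k_submodular_network k c" and "represents k c f"
  shows "normalised_min_cut k c S \<longleftrightarrow> (\<exists>y. min_solution k f y \<and> S = S_of y)"
proof
  assume "normalised_min_cut k c S"
  then obtain y where y: "assignment k y" "S = S_of y" and "min_cut k c S"
    unfolding normalised_min_cut_def normalised_iff_S_of by blast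
  with min_solution_iff_min_cut[OF assms y(1)] show "\<exists>y. min_solution k f y \<and> S = S_of y"
    by blast
next
  assume "\<exists>y. min_solution k f y \<and> S = S_of y"
  then obtain y where min: "min_solution k f y" and S: "S = S_of y"
    by blast
  then have y: "assignment k y"
    unfolding min_solution_def by blast
  show "normalised_min_cut k c S"
    unfolding normalised_min_cut_def S
    using normalised_S_of[OF y] min_solution_iff_min_cut[OF assms y] min by blast
qed

lemma ex_normalised_min_cut_iff:
  assumes "k_submodular_network k c" and "represents k c f"
  shows "(\<exists>S. normalised_min_cut k c S \<and> P S) \<longleftrightarrow> (\<exists>y. min_solution k f y \<and> P (S_of y))"
  unfolding normalised_min_cut_iff_min_solution[OF assms] by auto

theorem lemma17:
  fixes k :: nat
    and f :: "('x::finite \<Rightarrow> nat) \<Rightarrow> real"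
    and c :: "'x vertex \<Rightarrow> 'x vertex \<Rightarrow> real"
    and \<phi> :: "'x \<Rightarrow> nat"
  assumes "k \<ge> 1"
    and "capacities k c"
    and "k_submodular_network k c"
    and "represents k c f"
    and "assignment k \<phi>"
  shows "extreme_min_solution k f \<phi> \<longleftrightarrow> extreme_min_cut k c (S_of \<phi>)"
proof -
  have "min_solution k f \<phi> \<longleftrightarrow> normalised_min_cut k c (S_of \<phi>)"
    unfolding normalised_min_cut_iff_min_solution[OF assms(3,4)] inj_eq[OF inj_S_of] by blast
  moreover have "(\<exists>y. min_solution k f y \<and> dominates_sol y \<phi>) \<longleftrightarrow>
      (\<exists>S'. normalised_min_cut k c S' \<and> S_of \<phi> \<subset> S')"
    unfolding dominates_sol_iff_S_of_psubset
    using ex_normalised_min_cut_iff[OF assms(3,4), of "\<lambda>S. S_of \<phi> \<subset> S"] by (rule sym)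
  ultimately show ?thesis
    unfolding extreme_min_solution_def extreme_min_cut_def by blast
qed

end
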